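(* Let $C\subset\mathbb{R}^d$ be a cone and let $D$ be a $d$-dimensional subcone of $C$ such that for every $f$-subcone $S$ of $C$ either $D\subset S$ or $\operatorname{int}(D)\cap\operatorname{int}(S)=\emptyset$. Let $G_D$ be the intersection of the groups $\Gamma(S)$ over all $f$-subcones $S$ of $C$ with $S\supset D$, and $H_D$ the union of these groups. Then $D$ is $f$-covered (every element of $D\cap\mathbb{Z}^d$ is $f$-covered) if and only if every residue class of $\mathbb{Z}^d$ modulo $G_D$ meets $H_D$.
   Context: A cone is a subset $C\subset\mathbb{R}^d$ of the form $\mathbb{R}_+x_1+\dots+\mathbb{R}_+x_n$ with $x_i\in\mathbb{Z}^d$, assumed pointed ($x,-x\in C\Rightarrow x=0$) and of full dimension $d$; a subcone is a cone contained in $C$. $\operatorname{Hilb}(C)$ denotes the Hilbert basis of the monoid $C\cap\mathbb{Z}^d$, i.e. the set of nonzero elements of $C\cap\mathbb{Z}^d$ that cannot be written as $x+y$ with $x,y\in C\cap\mathbb{Z}^d$ both nonzero. An $f$-subcone of $C$ is a cone $S$ generated by $d$ linearly independent vectors $x_1,\dots,x_d\in\operatorname{Hilb}(C)$; for such $S$, $\Gamma(S)$ denotes the subgroup of $\mathbb{Z}^d$ generated by $x_1,\dots,x_d$ and $\Sigma(S)$ the submonoid of $\mathbb{Z}^d$ generated by $x_1,\dots,x_d$. An element $x\in C\cap\mathbb{Z}^d$ is $f$-covered if $x\in\Sigma(S)$ for some $f$-subcone $S$ of $C$; a subset of $C$ is $f$-covered if each of its lattice points is $f$-covered. (There are finitely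 many $f$-subcones, so $G_D$ has finite index when at least one $f$-subcone contains $D$; if none does, $G_D=\mathbb{Z}^d$ and $H_D=\emptyset$.) *)

theory Defs
  imports "HOL-Analysis.Analysis"
begin

text \<open>Ambient space: real^'n, so d = CARD('n). Lattice Z^d = integer-coordinate vectors.\<close>

definition lattice :: "(real^'n) set" where
  "lattice = {x. \<forall>i. x $ i \<in> \<int>}"

definition gen_cone :: "(real^'n) set \<Rightarrow> (real^'n) set" where
  "gen_cone X = {y. \<exists>c. (\<forall>x\<in>X. c x \<ge> 0) \<and> y = (\<Sum>x\<in>X. c x *\<^sub>R x)}"

definition is_cone :: "(real^'n) set \<Rightarrow> bool" where
  "is_cone C \<longleftrightarrow> (\<exists>X. finite X \<and> X \<subseteq> lattice \<and> C = gen_cone X)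
     \<and> (\<forall>x. x \<in> C \<and> - x \<in> C \<longrightarrow> x = 0)
     \<and> dim C = CARD('n)"

definition subcone :: "(real^'n) set \<Rightarrow> (real^'n) set \<Rightarrow> bool" where
  "subcone D C \<longleftrightarrow> is_cone D \<and> D \<subseteq> C"

definition Hilb :: "(real^'n) set \<Rightarrow> (real^'n) set" where
  "Hilb C = {x \<in> C \<inter> lattice. x \<noteq> 0 \<and>
      \<not> (\<exists>y z. y \<in> C \<inter> lattice \<and> z \<in> C \<inter> lattice \<and> y \<noteq> 0 \<and> z \<noteq> 0 \<and> x = y + z)}"

definition f_gens :: "(real^'n) set \<Rightarrow> (real^'n) set \<Rightarrow> bool" where
  "f_gens C X \<longleftrightarrow> X \<subseteq> Hilb C \<and> card X = CARD('n) \<and> finite X \<and> independent X"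

definition f_subcone :: "(real^'n) set \<Rightarrow> (real^'n) set \<Rightarrow> bool" where
  "f_subcone C S \<longleftrightarrow> (\<exists>X. f_gens C X \<and> S = gen_cone X)"

definition Gamma :: "(real^'n) set \<Rightarrow> (real^'n) set" where
  "Gamma X = {y. \<exists>c::real^'n \<Rightarrow> int. y = (\<Sum>x\<in>X. of_int (c x) *\<^sub>R x)}"

definition Sigma_mon :: "(real^'n) set \<Rightarrow> (real^'n) set" where
  "Sigma_mon X = {y. \<exists>c::real^'n \<Rightarrow> nat. y = (\<Sum>x\<in>X. of_nat (c x) *\<^sub>R x)}"

definition f_covered_pt :: "(real^'n) set \<Rightarrow> real^'n \<Rightarrow> bool" where
  "f_covered_pt C x \<longleftrightarrow> (\<exists>X. f_gens C X \<and> x \<in> Sigma_mon X)"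

definition f_covered :: "(real^'n) set \<Rightarrow> (real^'n) set \<Rightarrow> bool" where
  "f_covered C A \<longleftrightarrow> (\<forall>x \<in> A \<inter> lattice. f_covered_pt C x)"

text \<open>G_D: intersection of Gamma(S) over f-subcones S containing D (= Z^d if there are none);
  H_D: union of these groups (empty if there are none).\<close>
definition G_D :: "(real^'n) set \<Rightarrow> (real^'n) set \<Rightarrow> (real^'n) set" where
  "G_D C D = lattice \<inter> \<Inter> {Gamma X | X. f_gens C X \<and> D \<subseteq> gen_cone X}"

definition H_D :: "(real^'n) set \<Rightarrow> (real^'n) set \<Rightarrow> (real^'n) set" where
  "H_D C D = \<Union> {Gamma X | X. f_gens C X \<and> D \<subseteq> gen_cone X}"

end

theory Submission
  imports Defs
begin

text \<open>
  If \<open>D\<close> is f-covered, fix \<open>x \<in> \<int>\<^sup>d\<close>. Each \<open>\<Gamma>(S)\<close> has finite index and there are finitely many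
  f-subcones, so some \<open>N > 0\<close> has \<open>N \<int>\<^sup>d \<subseteq> \<Gamma>(S)\<close> for all of them, whence \<open>N \<int>\<^sup>d \<subseteq> G\<^sub>D\<close>.
  Removing from \<open>int D\<close> the finitely many hyperplanes spanned by facets of f-subcones leaves
  a nonempty open cone, which contains a lattice point \<open>y \<equiv> x (mod N \<int>\<^sup>d)\<close>. Being f-covered,
  \<open>y \<in> \<Sigma>(S)\<close> for some f-subcone \<open>S\<close>; since \<open>y\<close> lies on no facet hyperplane of \<open>S\<close>, all its
  coordinates are positive, so \<open>y \<in> int S\<close> and the dichotomy forces \<open>D \<subseteq> S\<close>. Thus \<open>y \<in> H\<^sub>D\<close>
  and \<open>x - y \<in> G\<^sub>D\<close>.

  Conversely, if \<open>x \<in> D \<inter> \<int>\<^sup>d\<close> and \<open>x - h \<in> G\<^sub>D\<close> with \<open>h \<in> \<Gamma>(S)\<close>, \<open>D \<subseteq> S\<close>, then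
  \<open>x \<in> \<Gamma>(S) \<inter> S = \<Sigma>(S)\<close>: the coordinates of \<open>x\<close> in the basis generating \<open>S\<close> are integral
  and nonnegative.
\<close>

lemma lattice_add: "x \<in> lattice \<Longrightarrow> y \<in> lattice \<Longrightarrow> x + y \<in> lattice"
  by (simp add: lattice_def)

lemma lattice_diff: "x \<in> lattice \<Longrightarrow> y \<in> lattice \<Longrightarrow> x - y \<in> lattice"
  by (simp add: lattice_def)

lemma lattice_scaleR: "x \<in> lattice \<Longrightarrow> k \<in> \<int> \<Longrightarrow> k *\<^sub>R x \<in> lattice"
  by (simp add: lattice_def)

lemma lattice_sum: "(\<And>i. i \<in> I \<Longrightarrow> f i \<in> lattice) \<Longrightarrow> sum f I \<in> lattice"
  by (induction I rule: infinite_finite_induct) (auto simp: lattice_def)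

lemma finite_lattice_Int_cball: "finite (lattice \<inter> cball (0::real^'n) R)"
proof -
  let ?I = "{k \<in> \<int>. \<bar>k\<bar> \<le> R}"
  have "x \<in> vec_lambda ` PiE UNIV (\<lambda>_. ?I)" if "x \<in> lattice \<inter> cball 0 R" for x :: "real^'n"
  proof -
    have "\<bar>x $ i\<bar> \<le> R" for i
      using that component_le_norm_cart[of x i] by (meson IntD2 mem_cball_0 order_trans)
    then have "($) x \<in> PiE UNIV (\<lambda>_. ?I)"
      using that by (auto simp: lattice_def)
    then show ?thesis by (rule image_eqI[rotated]) simp
  qed
  moreover have "finite (vec_lambda ` PiE (UNIV::'n set) (\<lambda>_. ?I))"
    by (intro finite_imageI finite_PiE finite_abs_int_segment) auto
  ultimately show ?thesis by (blast intro: finite_subset)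
qed

lemma lattice_coset_near:
  fixes x p :: "real^'n" and N :: real
  assumes "x \<in> lattice" "N > 0"
  obtains w where "w \<in> lattice" "norm (x + N *\<^sub>R w - p) \<le> CARD('n) * N"
proof
  define w :: "real^'n" where "w = (\<chi> i. of_int \<lfloor>(p $ i - x $ i) / N\<rfloor>)"
  show "w \<in> lattice" by (simp add: w_def lattice_def)
  have "\<bar>(x + N *\<^sub>R w - p) $ i\<bar> \<le> N" for i
  proof -
    define a where "a = (p $ i - x $ i) / N"
    have "N * (a - 1) \<le> N * of_int \<lfloor>a\<rfloor>" "N * of_int \<lfloor>a\<rfloor> \<le> N * a"
      using assms(2) by (intro mult_left_mono; linarith)+
    moreover have "N * a = p $ i - x $ i" using assms(2) by (simp add: a_def)
    ultimately show ?thesis by (auto simp: w_def a_def[symmetric] algebra_simps abs_le_iff)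
  qed
  then have "(\<Sum>i\<in>UNIV. \<bar>(x + N *\<^sub>R w - p) $ i\<bar>) \<le> (\<Sum>i\<in>(UNIV::'n set). N)"
    by (intro sum_mono)
  then have "norm (x + N *\<^sub>R w - p) \<le> (\<Sum>i\<in>(UNIV::'n set). N)"
    using norm_le_l1_cart order_trans by blast
  then show "norm (x + N *\<^sub>R w - p) \<le> CARD('n) * N" by simp
qed

lemma convex_cone_gen_cone: "convex_cone (gen_cone X)"
  unfolding convex_cone_iff
proof (intro conjI ballI allI impI)
  show "0 \<in> gen_cone X"
    unfolding gen_cone_def by (auto intro!: exI[of _ "\<lambda>_. 0"])
next
  fix y z assume "y \<in> gen_cone X" "z \<in> gen_cone X"
  then obtain c d where "\<forall>x\<in>X. 0 \<le> c x" "y = (\<Sum>x\<in>X. c x *\<^sub>R x)"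
      "\<forall>x\<in>X. 0 \<le> d x" "z = (\<Sum>x\<in>X. d x *\<^sub>R x)"
    by (auto simp: gen_cone_def)
  then show "y + z \<in> gen_cone X"
    unfolding gen_cone_def
    by (auto intro!: exI[of _ "\<lambda>x. c x + d x"] simp: sum.distrib scaleR_add_left)
next
  fix y and t :: real assume "y \<in> gen_cone X" "0 \<le> t"
  then obtain c where "\<forall>x\<in>X. 0 \<le> c x" "y = (\<Sum>x\<in>X. c x *\<^sub>R x)"
    by (auto simp: gen_cone_def)
  then show "t *\<^sub>R y \<in> gen_cone X"
    unfolding gen_cone_def using \<open>0 \<le> t\<close>
    by (auto intro!: exI[of _ "\<lambda>x. t * c x"] simp: scaleR_sum_right)
qed

lemma generator_in_gen_cone: "finite X \<Longrightarrow> g \<in> X \<Longrightarrow> g \<in> gen_cone X"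
  unfolding gen_cone_def mem_Collect_eq
  by (rule exI[of _ "\<lambda>x. if g = x then 1 else 0"]) (simp add: sum_delta'')

lemma diff_generator_in_gen_cone:
  assumes "finite X" "g \<in> X" "\<forall>x\<in>X. 0 \<le> c x" "1 \<le> c g"
  shows "(\<Sum>x\<in>X. c x *\<^sub>R x) - g \<in> gen_cone X"
proof -
  let ?c' = "c(g := c g - 1)"
  have sum_eq: "(\<Sum>x\<in>X. ?c' x *\<^sub>R x) = (\<Sum>x\<in>X. c x *\<^sub>R x) - g"
  proof -
    have "(\<Sum>x\<in>X. ?c' x *\<^sub>R x) = ?c' g *\<^sub>R g + (\<Sum>x\<in>X - {g}. ?c' x *\<^sub>R x)"
      using assms(1,2) by (rule sum.remove)
    also have "\<dots> = (c g *\<^sub>R g + (\<Sum>x\<in>X - {g}. c x *\<^sub>R x)) - g"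
      by (simp add: algebra_simps)
    also have "\<dots> = (\<Sum>x\<in>X. c x *\<^sub>R x) - g"
      using sum.remove[OF assms(1,2), of "\<lambda>x. c x *\<^sub>R x"] by simp
    finally show ?thesis .
  qed
  have "\<forall>x\<in>X. 0 \<le> ?c' x" using assms(3,4) by simp
  then show ?thesis
    unfolding gen_cone_def mem_Collect_eq sum_eq[symmetric] by (intro exI[of _ ?c'] conjI refl)
qed

lemma scaleR_mem_interior_conic:
  fixes S :: "'a::real_normed_vector set"
  assumes "conic S" "x \<in> interior S" "t > 0"
  shows "t *\<^sub>R x \<in> interior S"
proof -
  have "(*\<^sub>R) t ` interior S \<subseteq> interior S"
  proof (rule interior_maximal)
    show "(*\<^sub>R) t ` interior S \<subseteq> S"
      using assms(1,3) interior_subset by (fastforce intro: conicD)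
    show "open ((*\<^sub>R) t ` interior S)" using assms(3) by (intro open_scaling) auto
  qed
  then show ?thesis using assms(2) by blast
qed

lemma interior_full_dim_convex_cone_nonempty:
  fixes S :: "'a::euclidean_space set"
  assumes "convex_cone S" "dim S = DIM('a)"
  shows "interior S \<noteq> {}"
proof -
  have "0 \<in> S" "convex S" using assms(1) convex_cone_contains_0 by (auto simp: convex_cone_def)
  have "span S = UNIV" using assms(2) by (simp only: dim_eq_full)
  moreover have "affine hull S = span S" using \<open>0 \<in> S\<close> by (intro affine_hull_span_0 hull_inc)
  ultimately have "rel_interior S = interior S" by (intro rel_interior_interior) simp
  moreover have "rel_interior S \<noteq> {}" using \<open>convex S\<close> \<open>0 \<in> S\<close> rel_interior_eq_empty by auto
  ultimately show ?thesis by simp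
qed

lemma Hilb_subset_generators_or_small:
  assumes "finite X" "X \<subseteq> lattice" "C = gen_cone X"
  shows "Hilb C \<subseteq> X \<union> (lattice \<inter> cball 0 (\<Sum>x\<in>X. norm x))"
proof
  fix y assume y: "y \<in> Hilb C"
  then have "y \<in> C" "y \<in> lattice" by (auto simp: Hilb_def)
  then obtain c where c: "\<forall>x\<in>X. 0 \<le> c x" "y = (\<Sum>x\<in>X. c x *\<^sub>R x)"
    using assms(3) by (auto simp: gen_cone_def)
  show "y \<in> X \<union> (lattice \<inter> cball 0 (\<Sum>x\<in>X. norm x))"
  proof (cases "\<exists>g\<in>X. g \<noteq> 0 \<and> 1 \<le> c g")
    case True
    then obtain g where g: "g \<in> X" "g \<noteq> 0" "1 \<le> c g" by blast
    have "y - g \<in> C \<inter> lattice" "g \<in> C \<inter> lattice"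
      using diff_generator_in_gen_cone[OF assms(1) g(1) c(1) g(3)]
        generator_in_gen_cone[OF assms(1) g(1)] g(1) assms(2,3) c(2) \<open>y \<in> lattice\<close>
      by (auto intro: lattice_diff)
    moreover have "y = g + (y - g)" by simp
    ultimately have "y - g = 0" using y g(2) unfolding Hilb_def by blast
    then show ?thesis using g(1) by simp
  next
    case False
    have "norm y \<le> (\<Sum>x\<in>X. norm (c x *\<^sub>R x))" unfolding c(2) by (rule norm_sum)
    also have "\<dots> \<le> (\<Sum>x\<in>X. norm x)"
    proof (rule sum_mono)
      fix x assume "x \<in> X"
      then show "norm (c x *\<^sub>R x) \<le> norm x"
        using False c(1) by (cases "x = 0") (auto intro!: mult_left_le_one_le)
    qed
    finally show ?thesis using \<open>y \<in> lattice\<close> by simp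
  qed
qed

lemma finite_Hilb: "is_cone C \<Longrightarrow> finite (Hilb C)"
  unfolding is_cone_def
  by (auto intro!: finite_subset[OF Hilb_subset_generators_or_small] finite_lattice_Int_cball)

lemma finite_f_gens: "is_cone C \<Longrightarrow> finite {X. f_gens C X}"
  by (rule finite_subset[of _ "Pow (Hilb C)"]) (auto simp: f_gens_def finite_Hilb)

lemma f_gensD:
  fixes X :: "(real^'n) set"
  assumes "f_gens C X"
  shows "finite X" "independent X" "span X = UNIV" "X \<subseteq> Hilb C" "X \<subseteq> lattice"
proof -
  show "finite X" "independent X" "X \<subseteq> Hilb C" using assms by (auto simp: f_gens_def)
  then show "X \<subseteq> lattice" by (auto simp: Hilb_def)
  have "dim X = DIM(real^'n)"
    using assms dim_eq_card_independent[OF \<open>independent X\<close>] by (simp add: f_gens_def)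
  then show "span X = UNIV" by (simp only: dim_eq_full)
qed

lemma representation_sum_scaleR:
  fixes X :: "'a::real_vector set"
  assumes "independent X" "finite X" "b \<in> X"
  shows "representation X (\<Sum>x\<in>X. c x *\<^sub>R x) b = c b"
proof -
  have "representation X (\<Sum>x\<in>X. c x *\<^sub>R x) b = (\<Sum>x\<in>X. c x * representation X x b)"
    using assms(1) by (simp add: representation_sum representation_scale span_base span_scale)
  also have "\<dots> = (\<Sum>x\<in>X. if x = b then c x else 0)"
    using assms(1) by (intro sum.cong) (auto simp: representation_basis)
  finally show ?thesis using assms(2,3) by simp
qed

lemma linear_representation_coordinate:
  fixes X :: "'a::euclidean_space set"
  assumes "independent X" "span X = UNIV"
  shows "linear (\<lambda>v. representation X v b)"
  using linear_representation[OF assms, of b]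
  by (simp add: linear_def module_hom_def Vector_Spaces.linear_def vector_space_def module_def
      module_hom_axioms_def)

lemma continuous_on_representation:
  fixes X :: "'a::euclidean_space set"
  assumes "independent X" "span X = UNIV"
  shows "continuous_on UNIV (\<lambda>v. representation X v b)"
  by (intro linear_continuous_on)
    (simp add: linear_representation_coordinate[OF assms] flip: linear_conv_bounded_linear)

lemma negligible_representation_eq_0:
  fixes X :: "'a::euclidean_space set"
  assumes "independent X" "span X = UNIV" "b \<in> X"
  shows "negligible {v. representation X v b = 0}"
proof -
  let ?S = "{v. representation X v b = 0}"
  have "subspace ?S"
    using linear_subspace_kernel[OF linear_representation_coordinate[OF assms(1,2)]] by simp
  then have "span ?S = ?S" by (simp add: span_eq_iff)
  moreover have "b \<notin> ?S" using representation_basis[OF assms(1,3)] by simp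
  ultimately have "span ?S \<noteq> UNIV" by (simp only:) blast
  then have "dim ?S < DIM('a)"
    using dim_subset_UNIV[of ?S] dim_eq_full[of ?S] by linarith
  then show ?thesis by (rule negligible_lowdim)
qed

lemma sum_representation_basis:
  fixes X :: "(real^'n) set"
  assumes "independent X" "span X = UNIV"
  shows "(\<Sum>b\<in>X. representation X v b *\<^sub>R b) = v"
  using sum_representation_eq[of X v X] assms finiteI_independent[OF assms(1)] by simp

lemma mem_gen_cone_iff_representation:
  fixes X :: "(real^'n) set"
  assumes "independent X" "span X = UNIV"
  shows "y \<in> gen_cone X \<longleftrightarrow> (\<forall>b\<in>X. 0 \<le> representation X y b)"
proof
  assume "y \<in> gen_cone X"
  then show "\<forall>b\<in>X. 0 \<le> representation X y b"
    using assms(1) finiteI_independent[OF assms(1)]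
    by (auto simp: gen_cone_def representation_sum_scaleR)
next
  assume "\<forall>b\<in>X. 0 \<le> representation X y b"
  then show "y \<in> gen_cone X"
    unfolding gen_cone_def mem_Collect_eq
    by (intro exI[of _ "representation X y"] conjI) (simp_all add: sum_representation_basis[OF assms])
qed

lemma mem_Gamma_iff_representation:
  fixes X :: "(real^'n) set"
  assumes "independent X" "span X = UNIV"
  shows "y \<in> Gamma X \<longleftrightarrow> (\<forall>b\<in>X. representation X y b \<in> \<int>)"
proof
  assume "y \<in> Gamma X"
  then show "\<forall>b\<in>X. representation X y b \<in> \<int>"
    using assms(1) finiteI_independent[OF assms(1)]
    by (auto simp: Gamma_def representation_sum_scaleR)
next
  assume "\<forall>b\<in>X. representation X y b \<in> \<int>"
  then have "y = (\<Sum>b\<in>X. of_int \<lfloor>representation X y b\<rfloor> *\<^sub>R b)"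
    by (simp add: sum_representation_basis[OF assms])
  then show "y \<in> Gamma X"
    unfolding Gamma_def mem_Collect_eq by (rule exI[of _ "\<lambda>b. \<lfloor>representation X y b\<rfloor>"])
qed

lemma mem_Sigma_mon_iff_representation:
  fixes X :: "(real^'n) set"
  assumes "independent X" "span X = UNIV"
  shows "y \<in> Sigma_mon X \<longleftrightarrow> (\<forall>b\<in>X. representation X y b \<in> \<nat>)"
proof
  assume "y \<in> Sigma_mon X"
  then show "\<forall>b\<in>X. representation X y b \<in> \<nat>"
    using assms(1) finiteI_independent[OF assms(1)]
    by (auto simp: Sigma_mon_def representation_sum_scaleR)
next
  assume "\<forall>b\<in>X. representation X y b \<in> \<nat>"
  then have "(\<Sum>b\<in>X. of_nat (nat \<lfloor>representation X y b\<rfloor>) *\<^sub>R b) = (\<Sum>b\<in>X. representation X y b *\<^sub>R b)"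
    by (intro sum.cong) (auto elim!: Nats_cases)
  then have "y = (\<Sum>b\<in>X. of_nat (nat \<lfloor>representation X y b\<rfloor>) *\<^sub>R b)"
    by (simp add: sum_representation_basis[OF assms])
  then show "y \<in> Sigma_mon X"
    unfolding Sigma_mon_def mem_Collect_eq by (rule exI[of _ "\<lambda>b. nat \<lfloor>representation X y b\<rfloor>"])
qed

lemma Gamma_Int_gen_cone:
  fixes X :: "(real^'n) set"
  assumes "independent X" "span X = UNIV"
  shows "Gamma X \<inter> gen_cone X = Sigma_mon X"
  by (auto simp: mem_Gamma_iff_representation[OF assms] mem_gen_cone_iff_representation[OF assms]
      mem_Sigma_mon_iff_representation[OF assms] Nats_altdef2)

lemma positive_representation_subset_interior_gen_cone:
  fixes X :: "(real^'n) set"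
  assumes "independent X" "span X = UNIV"
  shows "{v. \<forall>b\<in>X. 0 < representation X v b} \<subseteq> interior (gen_cone X)"
proof (rule interior_maximal)
  show "{v. \<forall>b\<in>X. 0 < representation X v b} \<subseteq> gen_cone X"
    by (auto simp: mem_gen_cone_iff_representation[OF assms] less_imp_le)
  have "{v. \<forall>b\<in>X. 0 < representation X v b} = (\<Inter>b\<in>X. {v. 0 < representation X v b})" by auto
  then show "open {v. \<forall>b\<in>X. 0 < representation X v b}"
    using finiteI_independent[OF assms(1)]
    by (auto intro!: open_Collect_less continuous_on_representation[OF assms] continuous_on_const)
qed

lemma Gamma_add:
  assumes "y \<in> Gamma X" "z \<in> Gamma X"
  shows "y + z \<in> Gamma X"
proof -
  obtain c d where "y = (\<Sum>x\<in>X. of_int (c x) *\<^sub>R x)" "z = (\<Sum>x\<in>X. of_int (d x) *\<^sub>R x)"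
    using assms by (auto simp: Gamma_def)
  then have "y + z = (\<Sum>x\<in>X. of_int (c x + d x) *\<^sub>R x)"
    by (simp add: sum.distrib scaleR_add_left)
  then show ?thesis unfolding Gamma_def mem_Collect_eq by (rule exI[of _ "\<lambda>x. c x + d x"])
qed

lemma Gamma_scaleR_int:
  assumes "y \<in> Gamma X"
  shows "of_int k *\<^sub>R y \<in> Gamma X"
proof -
  obtain c where "y = (\<Sum>x\<in>X. of_int (c x) *\<^sub>R x)"
    using assms by (auto simp: Gamma_def)
  then have "of_int k *\<^sub>R y = (\<Sum>x\<in>X. of_int (k * c x) *\<^sub>R x)"
    by (simp add: scaleR_sum_right)
  then show ?thesis unfolding Gamma_def mem_Collect_eq by (rule exI[of _ "\<lambda>x. k * c x"])
qed

lemma Gamma_diff: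
  assumes "y \<in> Gamma X" "z \<in> Gamma X"
  shows "y - z \<in> Gamma X"
proof -
  have "y - z = y + of_int (- 1) *\<^sub>R z" by simp
  then show ?thesis by (simp only:) (intro Gamma_add Gamma_scaleR_int assms)
qed

lemma Gamma_subset_lattice: "X \<subseteq> lattice \<Longrightarrow> Gamma X \<subseteq> lattice"
  by (auto simp: Gamma_def intro!: lattice_sum lattice_scaleR)

lemma Sigma_mon_subset_Gamma: "Sigma_mon X \<subseteq> Gamma X"
proof
  fix y assume "y \<in> Sigma_mon X"
  then obtain c where "y = (\<Sum>x\<in>X. of_int (int (c x)) *\<^sub>R x)" by (auto simp: Sigma_mon_def)
  then show "y \<in> Gamma X" unfolding Gamma_def mem_Collect_eq by (rule exI[of _ "\<lambda>x. int (c x)"])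
qed

lemma lattice_mod_Gamma_small:
  fixes X :: "(real^'n) set"
  assumes "independent X" "span X = UNIV" "X \<subseteq> lattice" "v \<in> lattice"
  obtains g where "g \<in> Gamma X" "v - g \<in> lattice \<inter> cball 0 (\<Sum>b\<in>X. norm b)"
proof
  let ?r = "representation X v"
  define g where "g = (\<Sum>b\<in>X. of_int \<lfloor>?r b\<rfloor> *\<^sub>R b)"
  show "g \<in> Gamma X"
    unfolding g_def Gamma_def mem_Collect_eq by (intro exI[of _ "\<lambda>b. \<lfloor>?r b\<rfloor>"] refl)
  then have "v - g \<in> lattice"
    using Gamma_subset_lattice[OF assms(3)] assms(4) by (auto intro: lattice_diff)
  have "v - g = (\<Sum>b\<in>X. ?r b *\<^sub>R b) - g"
    using sum_representation_basis[OF assms(1,2)] by simp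
  also have "\<dots> = (\<Sum>b\<in>X. frac (?r b) *\<^sub>R b)"
    unfolding g_def frac_def by (simp add: sum_subtractf scaleR_diff_left)
  finally have "norm (v - g) = norm (\<Sum>b\<in>X. frac (?r b) *\<^sub>R b)" by simp
  also have "\<dots> \<le> (\<Sum>b\<in>X. norm (frac (?r b) *\<^sub>R b))"
    by (rule norm_sum)
  also have "\<dots> \<le> (\<Sum>b\<in>X. norm b)"
    by (intro sum_mono) (simp add: frac_lt_1 less_imp_le mult_left_le_one_le)
  finally show "v - g \<in> lattice \<inter> cball 0 (\<Sum>b\<in>X. norm b)"
    using \<open>v - g \<in> lattice\<close> by simp
qed

lemma Gamma_contains_bounded_multiple:
  fixes X :: "(real^'n) set"
  assumes "independent X" "span X = UNIV" "X \<subseteq> lattice" "(\<Sum>b\<in>X. norm b) \<le> R" "z \<in> lattice"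
  obtains k :: nat
  where "1 \<le> k" "k \<le> card (lattice \<inter> cball (0::real^'n) R)" "real k *\<^sub>R z \<in> Gamma X"
proof -
  define F where "F = lattice \<inter> cball (0::real^'n) R"
  have "\<exists>g. g \<in> Gamma X \<and> real k *\<^sub>R z - g \<in> F" for k :: nat
  proof -
    have "real k *\<^sub>R z \<in> lattice" using assms(5) by (simp add: lattice_scaleR)
    then obtain g where "g \<in> Gamma X" "real k *\<^sub>R z - g \<in> lattice \<inter> cball 0 (\<Sum>b\<in>X. norm b)"
      using lattice_mod_Gamma_small[OF assms(1-3)] by blast
    then show ?thesis using assms(4) by (auto simp: F_def)
  qed
  then obtain g where g: "\<forall>k. g k \<in> Gamma X \<and> real k *\<^sub>R z - g k \<in> F"
    using choice[of "\<lambda>k g. g \<in> Gamma X \<and> real k *\<^sub>R z - g \<in> F"] by blast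
  \<comment> \<open>pigeonhole: the remainders of \<open>0, z, \<dots>, card F * z\<close> modulo \<open>Gamma X\<close> all lie in \<open>F\<close>\<close>
  define f where "f k = real k *\<^sub>R z - g k" for k
  have "f ` {0..card F} \<subseteq> F" using g by (auto simp: f_def)
  then have "\<not> inj_on f {0..card F}"
    using card_inj_on_le[of f "{0..card F}" F] finite_lattice_Int_cball by (force simp: F_def)
  then obtain i j where "i \<le> card F" "j \<le> card F" "i \<noteq> j" "f i = f j"
    unfolding inj_on_def by auto
  then have "min i j < max i j" "max i j \<le> card F" "f (min i j) = f (max i j)"
    by (auto simp: min_def max_def)
  then obtain i j where ij: "i < j" "j \<le> card F" "f i = f j" by blast
  have "real (j - i) *\<^sub>R z = g j - g i"
    using ij by (simp add: f_def of_nat_diff algebra_simps)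
  then have "real (j - i) *\<^sub>R z \<in> Gamma X" using g by (simp add: Gamma_diff)
  then show ?thesis using ij by (intro that[of "j - i"]) (auto simp: F_def)
qed

lemma fact_scaleR_lattice_in_Gamma:
  fixes X :: "(real^'n) set"
  assumes "independent X" "span X = UNIV" "X \<subseteq> lattice" "(\<Sum>b\<in>X. norm b) \<le> R" "z \<in> lattice"
  shows "real (fact (card (lattice \<inter> cball (0::real^'n) R))) *\<^sub>R z \<in> Gamma X"
proof -
  obtain k :: nat where k: "1 \<le> k" "k \<le> card (lattice \<inter> cball (0::real^'n) R)" "real k *\<^sub>R z \<in> Gamma X"
    using Gamma_contains_bounded_multiple[OF assms] .
  then have "k dvd fact (card (lattice \<inter> cball (0::real^'n) R))" by (intro dvd_fact)
  then obtain m where m: "fact (card (lattice \<inter> cball (0::real^'n) R)) = k * m" by (rule dvdE)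
  have "real (fact (card (lattice \<inter> cball (0::real^'n) R))) *\<^sub>R z = of_int (int m) *\<^sub>R (real k *\<^sub>R z)"
    unfolding m by simp
  then show ?thesis by (simp only:) (rule Gamma_scaleR_int[OF k(3)])
qed

lemma f_gens_common_multiple_in_Gamma:
  fixes C :: "(real^'n) set"
  assumes "is_cone C"
  obtains N :: nat where "N > 0" "\<And>X z. f_gens C X \<Longrightarrow> z \<in> lattice \<Longrightarrow> real N *\<^sub>R z \<in> Gamma X"
proof
  let ?R = "\<Sum>b\<in>Hilb C. norm b"
  show "fact (card (lattice \<inter> cball (0::real^'n) ?R)) > (0::nat)" by simp
  fix X and z :: "real^'n" assume "f_gens C X" "z \<in> lattice"
  moreover have "(\<Sum>b\<in>X. norm b) \<le> ?R"
    using f_gensD(4)[OF \<open>f_gens C X\<close>] by (intro sum_mono2 finite_Hilb assms) auto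
  ultimately show "real (fact (card (lattice \<inter> cball (0::real^'n) ?R))) *\<^sub>R z \<in> Gamma X"
    using fact_scaleR_lattice_in_Gamma f_gensD by blast
qed

lemma open_cone_meets_lattice_coset:
  fixes V :: "(real^'n) set" and N :: real
  assumes "open V" "V \<noteq> {}" "\<And>v t. v \<in> V \<Longrightarrow> 0 < t \<Longrightarrow> t *\<^sub>R v \<in> V"
    and "x \<in> lattice" "N > 0"
  obtains w where "w \<in> lattice" "x + N *\<^sub>R w \<in> V"
proof -
  obtain q r where "r > 0" "ball q r \<subseteq> V"
    using assms(1,2) open_contains_ball by blast
  define K where "K = CARD('n) * N"
  define t where "t = K / r + 1"
  have "K \<ge> 0" using assms(5) by (simp add: K_def)
  then have "t > 0" "K < t * r" using \<open>r > 0\<close> by (auto simp: t_def field_simps add_nonneg_pos)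
  obtain w where w: "w \<in> lattice" "norm (x + N *\<^sub>R w - t *\<^sub>R q) \<le> K"
    using lattice_coset_near[OF assms(4,5)] unfolding K_def by blast
  define y where "y = x + N *\<^sub>R w"
  have "dist q (inverse t *\<^sub>R y) = norm (inverse t *\<^sub>R (t *\<^sub>R q - y))"
    using \<open>t > 0\<close> by (simp add: dist_norm algebra_simps)
  also have "\<dots> = inverse t * norm (y - t *\<^sub>R q)"
    using \<open>t > 0\<close> by (simp add: norm_minus_commute)
  also have "\<dots> < r"
    using w(2) \<open>K < t * r\<close> \<open>t > 0\<close> by (simp add: y_def field_simps)
  finally have "inverse t *\<^sub>R y \<in> V" using \<open>ball q r \<subseteq> V\<close> by auto
  then have "y \<in> V" using assms(3)[of _ t] \<open>t > 0\<close> by fastforce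
  then show thesis using that w(1) by (simp add: y_def)
qed

lemma open_Diff_negligible_nonempty:
  fixes S T :: "'a::euclidean_space set"
  assumes "open S" "S \<noteq> {}" "negligible T"
  shows "S - T \<noteq> {}"
  using assms negligible_subset open_not_negligible by blast

text \<open>\<open>{v. representation X v b = 0}\<close> is the hyperplane spanned by the facet \<open>X - {b}\<close> of
  the f-subcone generated by \<open>X\<close>.\<close>

definition f_walls :: "(real^'n) set \<Rightarrow> (real^'n) set set" where
  "f_walls C = (\<lambda>(X, b). {v. representation X v b = 0}) ` (SIGMA X:{X. f_gens C X}. X)"

definition generic_points :: "(real^'n) set \<Rightarrow> (real^'n) set \<Rightarrow> (real^'n) set" where
  "generic_points C D = interior D - \<Union>(f_walls C)"

lemma mem_generic_points:
  "v \<in> generic_points C D \<longleftrightarrow>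
     v \<in> interior D \<and> (\<forall>X b. f_gens C X \<longrightarrow> b \<in> X \<longrightarrow> representation X v b \<noteq> 0)"
  unfolding generic_points_def f_walls_def by blast

lemma finite_f_walls: "is_cone C \<Longrightarrow> finite (f_walls C)"
  unfolding f_walls_def
  by (intro finite_imageI finite_SigmaI finite_f_gens) (simp_all add: f_gensD(1))

lemma f_wall_closed_negligible:
  assumes "W \<in> f_walls C"
  shows "closed W" "negligible W"
proof -
  obtain X b where "f_gens C X" "b \<in> X" "W = {v. representation X v b = 0}"
    using assms unfolding f_walls_def by blast
  then show "closed W" "negligible W"
    using closed_Collect_eq[OF continuous_on_representation[OF f_gensD(2,3)] continuous_on_const]
      negligible_representation_eq_0[OF f_gensD(2,3)] by auto
qed

lemma open_generic_points: "is_cone C \<Longrightarrow> open (generic_points C D)"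
  unfolding generic_points_def
  using finite_f_walls f_wall_closed_negligible(1) by blast

lemma generic_points_nonempty:
  fixes C D :: "(real^'n) set"
  assumes "is_cone C" "is_cone D"
  shows "generic_points C D \<noteq> {}"
proof -
  obtain XD where "D = gen_cone XD" "dim D = CARD('n)"
    using assms(2) by (auto simp: is_cone_def)
  then have "interior D \<noteq> {}"
    using interior_full_dim_convex_cone_nonempty[OF convex_cone_gen_cone] by simp
  moreover have "negligible (\<Union>(f_walls C))"
    using finite_f_walls[OF assms(1)] f_wall_closed_negligible(2) by blast
  ultimately show ?thesis
    unfolding generic_points_def by (intro open_Diff_negligible_nonempty) auto
qed

lemma scaleR_mem_generic_points:
  assumes "is_cone D" "v \<in> generic_points C D" "0 < t"
  shows "t *\<^sub>R v \<in> generic_points C D"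
proof -
  obtain XD where "D = gen_cone XD" using assms(1) by (auto simp: is_cone_def)
  then have "t *\<^sub>R v \<in> interior D"
    using assms(2,3) convex_cone_gen_cone scaleR_mem_interior_conic
    unfolding mem_generic_points convex_cone_def by blast
  moreover have "representation X (t *\<^sub>R v) b \<noteq> 0" if "f_gens C X" "b \<in> X" for X b
    using assms(2,3) that representation_scale[OF f_gensD(2)[OF that(1)], of v t]
    by (simp add: mem_generic_points f_gensD(3))
  ultimately show ?thesis unfolding mem_generic_points by blast
qed

lemma generic_point_in_interior_f_subcone:
  assumes "y \<in> generic_points C D" "f_gens C X" "y \<in> Sigma_mon X"
  shows "y \<in> interior (gen_cone X)"
proof -
  note basis = f_gensD(2,3)[OF assms(2)]
  have "0 < representation X y b" if "b \<in> X" for b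
  proof -
    have "representation X y b \<in> \<nat>"
      using assms(3) that by (simp add: mem_Sigma_mon_iff_representation[OF basis])
    moreover have "representation X y b \<noteq> 0"
      using assms(1,2) that unfolding mem_generic_points by blast
    ultimately show ?thesis by (auto elim!: Nats_cases)
  qed
  then show ?thesis using positive_representation_subset_interior_gen_cone[OF basis] by blast
qed

lemma f_covered_imp_cosets_meet_H_D:
  fixes C D :: "(real^'n) set"
  assumes "is_cone C" "is_cone D"
    and separated: "\<forall>S. f_subcone C S \<longrightarrow> D \<subseteq> S \<or> interior D \<inter> interior S = {}"
    and "f_covered C D" "x \<in> lattice"
  shows "\<exists>h \<in> H_D C D. x - h \<in> G_D C D"
proof -
  obtain N :: nat where "N > 0"
    and N: "\<And>X z. f_gens C X \<Longrightarrow> z \<in> lattice \<Longrightarrow> real N *\<^sub>R z \<in> Gamma X"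
    using f_gens_common_multiple_in_Gamma[OF assms(1)] by blast
  obtain w where "w \<in> lattice" and y: "x + real N *\<^sub>R w \<in> generic_points C D"
    using open_cone_meets_lattice_coset[OF open_generic_points[OF assms(1)]
        generic_points_nonempty[OF assms(1,2)] scaleR_mem_generic_points[OF assms(2)]
        \<open>x \<in> lattice\<close>, of "real N"] \<open>N > 0\<close> by auto
  define y where "y = x + real N *\<^sub>R w"
  have "y \<in> lattice"
    using \<open>w \<in> lattice\<close> \<open>x \<in> lattice\<close> unfolding y_def by (blast intro: lattice_add lattice_scaleR Ints_of_nat)
  moreover have "y \<in> interior D" using y unfolding mem_generic_points y_def by blast
  ultimately obtain X where X: "f_gens C X" and "y \<in> Sigma_mon X"
    using \<open>f_covered C D\<close> interior_subset by (force simp: f_covered_def f_covered_pt_def)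
  then have "y \<in> interior (gen_cone X)"
    using generic_point_in_interior_f_subcone y by (simp add: y_def)
  moreover have "f_subcone C (gen_cone X)" using X by (auto simp: f_subcone_def)
  ultimately have "D \<subseteq> gen_cone X" using separated \<open>y \<in> interior D\<close> by blast
  then have "y \<in> H_D C D"
    using X \<open>y \<in> Sigma_mon X\<close> Sigma_mon_subset_Gamma by (auto simp: H_D_def)
  moreover have "x - y \<in> G_D C D"
  proof -
    have "- w \<in> lattice" using \<open>w \<in> lattice\<close> lattice_scaleR[of w "- 1"] by simp
    then have "x - y \<in> Gamma X'" if "f_gens C X'" for X'
      using N[OF that \<open>- w \<in> lattice\<close>] by (simp add: y_def)
    moreover have "x - y \<in> lattice" using \<open>x \<in> lattice\<close> \<open>y \<in> lattice\<close> by (rule lattice_diff)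
    ultimately show ?thesis by (auto simp: G_D_def)
  qed
  ultimately show ?thesis by blast
qed

lemma cosets_meet_H_D_imp_f_covered:
  fixes C D :: "(real^'n) set"
  assumes "\<forall>x \<in> lattice. \<exists>h \<in> H_D C D. x - h \<in> G_D C D"
  shows "f_covered C D"
  unfolding f_covered_def
proof
  fix x assume x: "x \<in> D \<inter> lattice"
  then obtain h where h: "h \<in> H_D C D" "x - h \<in> G_D C D" using assms by blast
  then obtain X where X: "f_gens C X" "D \<subseteq> gen_cone X" "h \<in> Gamma X"
    by (auto simp: H_D_def)
  have "x - h \<in> Gamma X" using h(2) X by (auto simp: G_D_def)
  then have "x \<in> Gamma X" using Gamma_add[OF _ X(3)] by fastforce
  moreover have "x \<in> gen_cone X" using x X(2) by blast
  ultimately have "x \<in> Sigma_mon X" using Gamma_Int_gen_cone[OF f_gensD(2,3)[OF X(1)]] by blast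
  then show "f_covered_pt C x" using X(1) by (auto simp: f_covered_pt_def)
qed

theorem lemma3p1:
  fixes C D :: "(real^'n) set"
  assumes "is_cone C"
    and "subcone D C"
    and "\<forall>S. f_subcone C S \<longrightarrow> D \<subseteq> S \<or> interior D \<inter> interior S = {}"
  shows "f_covered C D \<longleftrightarrow>
         (\<forall>x \<in> lattice. \<exists>h \<in> H_D C D. x - h \<in> G_D C D)"
proof
  assume "f_covered C D"
  then show "\<forall>x \<in> lattice. \<exists>h \<in> H_D C D. x - h \<in> G_D C D"
    using f_covered_imp_cosets_meet_H_D[OF assms(1) _ assms(3)] assms(2) by (simp add: subcone_def)
next
  assume "\<forall>x \<in> lattice. \<exists>h \<in> H_D C D. x - h \<in> G_D C D"
  then show "f_covered C D" by (rule cosets_meet_H_D_imp_f_covered)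
qed

end
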